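(* For every strictly balanced graph $H$ and every positive integer $N$, w.h.p. the first $N$ copies of $H$ which appear in the random graph process on $[n]$ are pairwise vertex disjoint.
   Context: For a graph $F$, $d(F)=e(F)/v(F)$; $F$ is strictly balanced if $d(F)>d(F')$ for every proper subgraph $F'\subsetneq F$. The random graph process on $[n]$ adds the edges of $K_n$ one by one in a uniformly random order, producing graphs $G_0\subseteq G_1\subseteq\dots\subseteq G_{\binom n2}$. "W.h.p." means with probability tending to 1 as $n\to\infty$. *)

theory Defs
  imports "HOL-Probability.Probability"
begin

definition is_graph :: "'a set \<Rightarrow> 'a set set \<Rightarrow> bool" where
  "is_graph V E \<longleftrightarrow> finite V \<and> (\<forall>e\<in>E. e \<subseteq> V \<and> card e = 2)"

definition density :: "'a set \<Rightarrow> 'a set set \<Rightarrow> real" where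
  "density V E = real (card E) / real (card V)"

text \<open>Strictly balanced: d(H) > d(F) for every proper subgraph F of H
  (subgraphs with at least one vertex, so that d(F) is defined).\<close>
definition strictly_balanced :: "'a set \<Rightarrow> 'a set set \<Rightarrow> bool" where
  "strictly_balanced V E \<longleftrightarrow> is_graph V E \<and> V \<noteq> {} \<and>
     (\<forall>V' E'. V' \<subseteq> V \<and> E' \<subseteq> E \<and> (\<forall>e\<in>E'. e \<subseteq> V') \<and> V' \<noteq> {}
        \<and> (V', E') \<noteq> (V, E) \<longrightarrow> density V' E' < density V E)"

text \<open>Edges of the complete graph K_n on the vertex set [n] = {0,...,n-1}.\<close>
definition Kn_edges :: "nat \<Rightarrow> nat set set" where
  "Kn_edges n = {e. e \<subseteq> {..<n} \<and> card e = 2}"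

text \<open>Orderings of the edges of K_n; the random graph process is the uniform
  distribution on these, and G_t consists of the first t edges.\<close>
definition edge_orderings :: "nat \<Rightarrow> nat set list set" where
  "edge_orderings n = {xs. distinct xs \<and> set xs = Kn_edges n}"

definition graph_process :: "nat \<Rightarrow> nat set list pmf" where
  "graph_process n = pmf_of_set (edge_orderings n)"

definition graph_at :: "nat set list \<Rightarrow> nat \<Rightarrow> nat set set" where
  "graph_at xs t = set (take t xs)"

definition copies :: "'a set \<Rightarrow> 'a set set \<Rightarrow> nat \<Rightarrow> nat set set \<Rightarrow> (nat set \<times> nat set set) set" where
  "copies V E n G = {(V', E'). \<exists>f. inj_on f V \<and> f ` V \<subseteq> {..<n} \<and> V' = f ` V
        \<and> E' = (\<lambda>e. f ` e) ` E \<and> E' \<subseteq> G}"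

text \<open>The event that the first N copies of H appearing in the process xs are pairwise
  vertex disjoint: at least N copies appear eventually, and at every time t up to
  (and including) the step at which the N-th copy appears, all copies present in G_t
  are pairwise vertex disjoint.\<close>
definition first_copies_disjoint ::
    "'a set \<Rightarrow> 'a set set \<Rightarrow> nat \<Rightarrow> nat \<Rightarrow> nat set list \<Rightarrow> bool" where
  "first_copies_disjoint V E N n xs \<longleftrightarrow>
     N \<le> card (copies V E n (graph_at xs (length xs))) \<and>
     (\<forall>t \<le> length xs. (t = 0 \<or> card (copies V E n (graph_at xs (t - 1))) < N) \<longrightarrow>
        (\<forall>C \<in> copies V E n (graph_at xs t). \<forall>D \<in> copies V E n (graph_at xs t).
            C \<noteq> D \<longrightarrow> fst C \<inter> fst D = {}))"

end

theory Submission
  imports Defs "HOL-Combinatorics.Multiset_Permutations" "HOL-Real_Asymp.Real_Asymp"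
begin

text \<open>Let H have v vertices and e edges, and stop the process at the critical time
  m = p (n choose 2) with p = n^(\<eta> - v/e), \<eta> = 1/(4e^2). The expected number of copies
  of H in G_m is of order n^v p^e = n^(1/(4e)), which tends to infinity. Two distinct copies
  sharing j vertices share fewer than e j / v edges, because the common part is a proper
  subgraph of the strictly balanced H; this makes the expected number of pairs of overlapping
  copies in G_m of order n^(-1/(2e)), which tends to 0. By Chebyshev's inequality G_m then
  w.h.p. contains at least N copies, no two of which share a vertex, and since copies only
  accumulate the first N copies are pairwise vertex disjoint.\<close>

section \<open>Random orderings\<close>

lemma permutations_of_set_take_eq:
  assumes "finite A" "U \<subseteq> A" "card U = m"
  shows "{xs \<in> permutations_of_set A. set (take m xs) = U} =
     (\<lambda>(ys, zs). ys @ zs) ` (permutations_of_set U \<times> permutations_of_set (A - U))"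
proof (intro equalityI subsetI)
  fix xs assume "xs \<in> {xs \<in> permutations_of_set A. set (take m xs) = U}"
  hence xs: "set xs = A" "distinct xs" "set (take m xs) = U"
    by (auto simp: permutations_of_set_def)
  have "set (take m xs) \<inter> set (drop m xs) = {}"
    using xs(2) by (metis append_take_drop_id distinct_append)
  moreover have "set (take m xs) \<union> set (drop m xs) = A"
    using xs(1) by (metis set_append append_take_drop_id)
  ultimately have "set (drop m xs) = A - U" using xs(3) by blast
  hence "(take m xs, drop m xs) \<in> permutations_of_set U \<times> permutations_of_set (A - U)"
    using xs by (auto simp: permutations_of_set_def)
  thus "xs \<in> (\<lambda>(ys, zs). ys @ zs) ` (permutations_of_set U \<times> permutations_of_set (A - U))"
    by (rule rev_image_eqI) simp
next
  fix xs assume "xs \<in> (\<lambda>(ys, zs). ys @ zs) ` (permutations_of_set U \<times> permutations_of_set (A - U))"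
  then obtain ys zs where xs: "xs = ys @ zs" and ys: "set ys = U" "distinct ys"
    and zs: "set zs = A - U" "distinct zs"
    by (auto simp: permutations_of_set_def)
  have "length ys = m" using ys assms(3) distinct_card by metis
  thus "xs \<in> {xs \<in> permutations_of_set A. set (take m xs) = U}"
    using xs ys zs assms(2) by (auto simp: permutations_of_set_def)
qed

lemma card_permutations_of_set_take_eq:
  assumes "finite A" "U \<subseteq> A" "card U = m"
  shows "card {xs \<in> permutations_of_set A. set (take m xs) = U} = fact m * fact (card A - m)"
proof -
  have "inj_on (\<lambda>(ys, zs). ys @ zs) (permutations_of_set U \<times> permutations_of_set (A - U))"
    by (rule inj_onI) (auto simp: length_finite_permutations_of_set)
  moreover have "finite U" using assms finite_subset by blast
  ultimately show ?thesis
    unfolding permutations_of_set_take_eq[OF assms] using assms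
    by (simp add: card_image card_cartesian_product card_Diff_subset)
qed

text \<open>The falling-factorial ratio (m)_k / (M)_k: the probability that k given
  elements all lie among the first m entries of a uniformly random ordering of M elements.\<close>
fun containment_prob :: "nat \<Rightarrow> nat \<Rightarrow> nat \<Rightarrow> real" where
  "containment_prob M m 0 = 1"
| "containment_prob M m (Suc k) = containment_prob M m k * (real m - real k) / (real M - real k)"

lemma containment_prob_fact:
  assumes "k \<le> m" "m \<le> M"
  shows "containment_prob M m k * fact M * fact (m - k) = fact m * fact (M - k)"
  using assms(1)
proof (induction k)
  case (Suc k)
  have IH: "containment_prob M m k * fact M * fact (m - k) = fact m * fact (M - k)"
    using Suc by simp
  have m: "(fact (m - k) :: real) = (real m - real k) * fact (m - Suc k)"
    using Suc.prems fact_reduce[of "m - k", where 'a=real] by (simp add: of_nat_diff)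
  have M: "(fact (M - k) :: real) = (real M - real k) * fact (M - Suc k)"
    using Suc.prems assms(2) fact_reduce[of "M - k", where 'a=real] by (simp add: of_nat_diff)
  have "real M - real k > 0" using Suc.prems assms(2) by simp
  with IH m M show ?case by (simp add: field_simps)
qed simp

lemma containment_prob_eq_0: "m < k \<Longrightarrow> containment_prob M m k = 0"
  by (induction k) (auto simp: less_Suc_eq)

lemma containment_prob_nonneg: "m \<le> M \<Longrightarrow> 0 \<le> containment_prob M m k"
proof (induction k)
  case (Suc k)
  show ?case
  proof (cases "k < m")
    case True
    with Suc show ?thesis by simp
  next
    case False
    hence "containment_prob M m (Suc k) = 0" by (intro containment_prob_eq_0) simp
    thus ?thesis by linarith
  qed
qed simp

lemma containment_prob_le_power:
  assumes "m \<le> M"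
  shows "containment_prob M m k \<le> (real m / real M) ^ k"
proof (induction k)
  case (Suc k)
  show ?case
  proof (cases "k < m")
    case True
    have pos: "real m - real k \<ge> 0" "real M - real k > 0" using True assms by auto
    have "(real m - real k) * real M \<le> real m * (real M - real k)"
      using mult_left_mono[of "real m" "real M" "real k"] assms by (simp add: algebra_simps)
    hence "(real m - real k) / (real M - real k) \<le> real m / real M"
      using pos True by (simp add: divide_simps)
    hence "containment_prob M m k * ((real m - real k) / (real M - real k))
        \<le> (real m / real M) ^ k * (real m / real M)"
      using Suc containment_prob_nonneg[OF assms, of k] pos by (intro mult_mono) auto
    thus ?thesis by (simp add: ac_simps)
  next
    case False
    hence "containment_prob M m (Suc k) = 0" by (intro containment_prob_eq_0) simp
    thus ?thesis by (simp del: containment_prob.simps(2))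
  qed
qed simp

lemma containment_prob_add_le:
  assumes "m \<le> M"
  shows "containment_prob M m (a + b) \<le> containment_prob M m a * containment_prob M m b"
proof (induction b)
  case (Suc b)
  have nonneg: "0 \<le> containment_prob M m a" "0 \<le> containment_prob M m b"
    using containment_prob_nonneg[OF assms] by blast+
  show ?case
  proof (cases "a + b < m")
    case True
    have pos: "real m - real (a + b) \<ge> 0" "real M - real (a + b) > 0" "real M - real b > 0"
      using True assms by auto
    have "(real m - real (a + b)) * (real M - real b) \<le> (real m - real b) * (real M - real (a + b))"
      using mult_left_mono[of "real m" "real M" "real a"] assms by (simp add: algebra_simps)
    hence "(real m - real (a + b)) / (real M - real (a + b)) \<le> (real m - real b) / (real M - real b)"
      using pos by (simp add: divide_simps)
    hence "containment_prob M m (a + b) * ((real m - real (a + b)) / (real M - real (a + b)))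
        \<le> (containment_prob M m a * containment_prob M m b) * ((real m - real b) / (real M - real b))"
      using Suc nonneg pos containment_prob_nonneg[OF assms, of "a + b"] by (intro mult_mono) auto
    thus ?thesis by simp
  next
    case False
    hence "containment_prob M m (a + Suc b) = 0" by (intro containment_prob_eq_0) simp
    thus ?thesis using nonneg containment_prob_nonneg[OF assms, of "Suc b"]
      by (simp del: containment_prob.simps(2))
  qed
qed simp

lemma containment_prob_ge_power:
  assumes "k \<le> m" "m \<le> M"
  shows "((real m - real k) / real M) ^ k \<le> containment_prob M m k"
  using assms(1)
proof (induction k)
  case (Suc k)
  have pos: "real m - real k - 1 \<ge> 0" "real M - real k > 0" "real M > 0"
    using Suc.prems assms(2) by auto
  have "((real m - real (Suc k)) / real M) ^ Suc k
      = ((real m - real k - 1) / real M) ^ k * ((real m - real k - 1) / real M)"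
    by (simp add: algebra_simps)
  also have "\<dots> \<le> ((real m - real k) / real M) ^ k * ((real m - real k) / (real M - real k))"
  proof (intro mult_mono power_mono)
    show "(real m - real k - 1) / real M \<le> (real m - real k) / real M"
      using pos by (simp add: divide_simps)
    show "(real m - real k - 1) / real M \<le> (real m - real k) / (real M - real k)"
      using pos by (intro frac_le) auto
  qed (use pos in auto)
  also have "\<dots> \<le> containment_prob M m k * ((real m - real k) / (real M - real k))"
    using Suc pos by (intro mult_right_mono) auto
  finally show ?case by simp
qed simp

lemma card_supersets_of_card:
  assumes A: "finite A" and S: "S \<subseteq> A" "card S = k" and "k \<le> m"
  shows "card {U. U \<subseteq> A \<and> card U = m \<and> S \<subseteq> U} = (card A - k) choose (m - k)"
proof -
  have fS: "finite S" using S A finite_subset by blast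
  have "{U. U \<subseteq> A \<and> card U = m \<and> S \<subseteq> U} = (\<lambda>T. T \<union> S) ` {T. T \<subseteq> A - S \<and> card T = m - k}"
  proof (intro equalityI subsetI)
    fix U assume U: "U \<in> {U. U \<subseteq> A \<and> card U = m \<and> S \<subseteq> U}"
    hence "card (U - S) = m - k" "U = (U - S) \<union> S" using S fS by (auto simp: card_Diff_subset)
    thus "U \<in> (\<lambda>T. T \<union> S) ` {T. T \<subseteq> A - S \<and> card T = m - k}" using U by blast
  next
    fix U assume "U \<in> (\<lambda>T. T \<union> S) ` {T. T \<subseteq> A - S \<and> card T = m - k}"
    then obtain T where T: "T \<subseteq> A - S" "card T = m - k" "U = T \<union> S" by blast
    have "finite T" "T \<inter> S = {}" using T A finite_subset by blast+
    hence "card U = m" using T S fS assms(4) by (simp add: card_Un_disjoint)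
    thus "U \<in> {U. U \<subseteq> A \<and> card U = m \<and> S \<subseteq> U}" using T S by blast
  qed
  moreover have "inj_on (\<lambda>T. T \<union> S) {T. T \<subseteq> A - S \<and> card T = m - k}"
    by (rule inj_onI) blast
  ultimately show ?thesis
    using n_subsets[of "A - S" "m - k"] A S fS by (simp add: card_image card_Diff_subset)
qed

lemma card_permutations_of_set_take_superset:
  assumes A: "finite A" and S: "S \<subseteq> A" and m: "m \<le> card A"
  shows "real (card {xs \<in> permutations_of_set A. S \<subseteq> set (take m xs)})
           = fact (card A) * containment_prob (card A) m (card S)"
proof -
  define k where "k = card S"
  define Us where "Us = {U. U \<subseteq> A \<and> card U = m \<and> S \<subseteq> U}"
  have "finite Us" unfolding Us_def using A by (auto intro: finite_subset[of _ "Pow A"])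
  moreover have "{xs \<in> permutations_of_set A. S \<subseteq> set (take m xs)} =
      (\<Union>U\<in>Us. {xs \<in> permutations_of_set A. set (take m xs) = U})"
  proof -
    have "set (take m xs) \<subseteq> A" "card (set (take m xs)) = m" if "xs \<in> permutations_of_set A" for xs
      using that m A by (auto simp: permutations_of_set_def distinct_card
          length_finite_permutations_of_set dest: in_set_takeD)
    thus ?thesis unfolding Us_def by blast
  qed
  ultimately have "card {xs \<in> permutations_of_set A. S \<subseteq> set (take m xs)} =
      (\<Sum>U\<in>Us. card {xs \<in> permutations_of_set A. set (take m xs) = U})"
    by (simp only:) (intro card_UN_disjoint, auto)
  also have "\<dots> = card Us * (fact m * fact (card A - m))"
    using card_permutations_of_set_take_eq[OF A] by (simp add: Us_def)
  finally have count: "card {xs \<in> permutations_of_set A. S \<subseteq> set (take m xs)}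
      = card Us * (fact m * fact (card A - m))" .
  show ?thesis
  proof (cases "k \<le> m")
    case False
    hence "Us = {}" unfolding Us_def k_def using S A by (auto dest: card_mono[OF finite_subset])
    thus ?thesis using count containment_prob_eq_0[of m k] False k_def by simp
  next
    case True
    have "card Us * fact (m - k) * fact (card A - m) = fact (card A - k)"
      using card_supersets_of_card[OF A S k_def[symmetric] True] binomial_fact_lemma[of "m - k" "card A - k"]
        True m by (simp add: Us_def ac_simps)
    hence "real (card {xs \<in> permutations_of_set A. S \<subseteq> set (take m xs)}) * fact (m - k)
        = fact m * fact (card A - k)"
      unfolding count by (metis (mono_tags) of_nat_fact of_nat_mult mult.assoc mult.commute)
    also have "\<dots> = containment_prob (card A) m k * fact (card A) * fact (m - k)"
      using containment_prob_fact[OF True m] by simp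
    finally show ?thesis unfolding k_def by simp
  qed
qed

section \<open>Copies of H\<close>

text \<open>Embeddings are taken extensional, so that there are only finitely many.\<close>
definition embeddings :: "'a set \<Rightarrow> nat \<Rightarrow> ('a \<Rightarrow> nat) set" where
  "embeddings V n = {f \<in> V \<rightarrow>\<^sub>E {..<n}. inj_on f V}"

definition copy_of :: "'a set \<Rightarrow> 'a set set \<Rightarrow> ('a \<Rightarrow> nat) \<Rightarrow> nat set \<times> nat set set" where
  "copy_of V E f = (f ` V, (\<lambda>e. f ` e) ` E)"

definition all_copies :: "'a set \<Rightarrow> 'a set set \<Rightarrow> nat \<Rightarrow> (nat set \<times> nat set set) set" where
  "all_copies V E n = copy_of V E ` embeddings V n"

lemma finite_embeddings: "finite V \<Longrightarrow> finite (embeddings V n)"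
  unfolding embeddings_def by (rule finite_subset[of _ "V \<rightarrow>\<^sub>E {..<n}"]) (auto intro: finite_PiE)

lemma finite_all_copies: "finite V \<Longrightarrow> finite (all_copies V E n)"
  unfolding all_copies_def by (simp add: finite_embeddings)

lemma copies_eq_all_copies:
  assumes "\<forall>e\<in>E. e \<subseteq> V"
  shows "copies V E n G = {C \<in> all_copies V E n. snd C \<subseteq> G}"
proof (intro equalityI subsetI)
  fix C assume "C \<in> copies V E n G"
  then obtain f where f: "inj_on f V" "f ` V \<subseteq> {..<n}" "C = copy_of V E f" "snd C \<subseteq> G"
    unfolding copies_def copy_of_def by auto
  have "restrict f V \<in> embeddings V n"
    using f(1,2) by (auto simp: embeddings_def inj_on_def)
  moreover have "copy_of V E (restrict f V) = copy_of V E f"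
    using assms by (auto simp: copy_of_def intro!: image_cong)
  ultimately show "C \<in> {C \<in> all_copies V E n. snd C \<subseteq> G}"
    using f(3,4) unfolding all_copies_def by (metis (mono_tags, lifting) image_eqI mem_Collect_eq)
next
  fix C assume "C \<in> {C \<in> all_copies V E n. snd C \<subseteq> G}"
  then obtain f where "f \<in> embeddings V n" "C = copy_of V E f" "snd C \<subseteq> G"
    unfolding all_copies_def by blast
  thus "C \<in> copies V E n G"
    unfolding copies_def copy_of_def embeddings_def by (auto simp: PiE_def)
qed

lemma card_vertices_copy_of:
  "f \<in> embeddings V n \<Longrightarrow> card (fst (copy_of V E f)) = card V"
  unfolding embeddings_def copy_of_def by (simp add: card_image)

lemma card_edges_copy_of:
  assumes "\<forall>e\<in>E. e \<subseteq> V" "f \<in> embeddings V n"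
  shows "card (snd (copy_of V E f)) = card E"
proof -
  have "inj_on f V" using assms(2) unfolding embeddings_def by blast
  hence "inj_on (\<lambda>e. f ` e) E" using assms(1) by (meson inj_on_image_eq_iff inj_onI)
  thus ?thesis unfolding copy_of_def by (simp add: card_image)
qed

lemma edges_copy_of_subset_Kn_edges:
  assumes "is_graph V E" "f \<in> embeddings V n"
  shows "snd (copy_of V E f) \<subseteq> Kn_edges n"
proof
  fix x assume "x \<in> snd (copy_of V E f)"
  then obtain e where e: "e \<in> E" "x = f ` e" unfolding copy_of_def by auto
  have "e \<subseteq> V" "card e = 2" using assms(1) e unfolding is_graph_def by auto
  moreover have "inj_on f V" "f \<in> V \<rightarrow>\<^sub>E {..<n}" using assms(2) unfolding embeddings_def by auto
  ultimately show "x \<in> Kn_edges n"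
    unfolding Kn_edges_def using e by (auto simp: card_image inj_on_subset)
qed

lemma edges_disjoint_if_vertices_disjoint:
  assumes "is_graph V E" "C \<in> all_copies V E n" "D \<in> all_copies V E n" "fst C \<inter> fst D = {}"
  shows "snd C \<inter> snd D = {}"
proof (rule ccontr)
  assume "snd C \<inter> snd D \<noteq> {}"
  then obtain x where x: "x \<in> snd C" "x \<in> snd D" by blast
  obtain f g where fg: "C = copy_of V E f" "D = copy_of V E g"
    using assms(2,3) unfolding all_copies_def by blast
  obtain e1 e2 where e: "e1 \<in> E" "x = f ` e1" "e2 \<in> E" "x = g ` e2"
    using x fg unfolding copy_of_def by auto
  have "e1 \<subseteq> V" "card e1 = 2" "e2 \<subseteq> V" using assms(1) e unfolding is_graph_def by auto
  then obtain a where "a \<in> e1" by fastforce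
  moreover have "f a \<in> g ` e2" using e \<open>a \<in> e1\<close> by blast
  ultimately have "f a \<in> fst C \<inter> fst D"
    using fg \<open>e1 \<subseteq> V\<close> \<open>e2 \<subseteq> V\<close> unfolding copy_of_def by auto
  thus False using assms(4) by blast
qed

lemma card_embeddings_le: "finite V \<Longrightarrow> card (embeddings V n) \<le> n ^ card V"
  using card_mono[of "V \<rightarrow>\<^sub>E {..<n}" "embeddings V n"]
  by (auto simp: embeddings_def card_PiE finite_PiE)

lemma card_embeddings_ge: "finite V \<Longrightarrow> (n - card V) ^ card V \<le> card (embeddings V n)"
proof -
  assume fin: "finite V"
  have "card (embeddings V n) = (\<Prod>i = 0..<card V. n - i)"
    unfolding embeddings_def using card_inj_on_subset_funcset[OF fin _ order_refl, of "{..<n}"] by simp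
  also have "\<dots> \<ge> (\<Prod>i = 0..<card V. n - card V)" by (rule prod_mono) auto
  finally show ?thesis by simp
qed

lemma card_embeddings_le_card_all_copies:
  assumes fin: "finite V"
  shows "card (embeddings V n) \<le> card (all_copies V E n) * card V ^ card V"
proof -
  have fiber: "card {f \<in> embeddings V n. copy_of V E f = C} \<le> card V ^ card V"
    if C: "C \<in> all_copies V E n" for C
  proof -
    obtain g where g: "g \<in> embeddings V n" "C = copy_of V E g"
      using C unfolding all_copies_def by blast
    have "{f \<in> embeddings V n. copy_of V E f = C} \<subseteq> V \<rightarrow>\<^sub>E fst C"
      unfolding embeddings_def copy_of_def by auto
    hence "card {f \<in> embeddings V n. copy_of V E f = C} \<le> card (V \<rightarrow>\<^sub>E fst C)"
      by (rule card_mono[rotated]) (auto intro: finite_PiE fin simp: g copy_of_def)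
    also have "\<dots> = card V ^ card V"
      using fin card_vertices_copy_of[OF g(1)] g(2) by (simp add: card_PiE)
    finally show ?thesis .
  qed
  have "embeddings V n \<subseteq> (\<Union>C\<in>all_copies V E n. {f \<in> embeddings V n. copy_of V E f = C})"
    unfolding all_copies_def by blast
  hence "card (embeddings V n) \<le> card (\<Union>C\<in>all_copies V E n. {f \<in> embeddings V n. copy_of V E f = C})"
    by (rule card_mono[rotated]) (rule finite_subset[OF _ finite_embeddings[OF fin]], blast)
  also have "\<dots> \<le> (\<Sum>C\<in>all_copies V E n. card {f \<in> embeddings V n. copy_of V E f = C})"
    by (rule card_UN_le) (rule finite_all_copies[OF fin])
  also have "\<dots> \<le> (\<Sum>C\<in>all_copies V E n. card V ^ card V)"
    by (rule sum_mono) (rule fiber)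
  finally show ?thesis by simp
qed

lemma strictly_balancedD:
  assumes "strictly_balanced V E"
  shows "is_graph V E" "finite V" "V \<noteq> {}" "\<forall>e\<in>E. e \<subseteq> V" "finite E"
proof -
  show "is_graph V E" "finite V" "V \<noteq> {}" "\<forall>e\<in>E. e \<subseteq> V"
    using assms unfolding strictly_balanced_def is_graph_def by auto
  hence "E \<subseteq> Pow V" "finite (Pow V)" by auto
  thus "finite E" by (rule finite_subset)
qed

lemma strictly_balanced_density_less:
  assumes "strictly_balanced V E" "V' \<subseteq> V" "E' \<subseteq> E" "\<forall>e\<in>E'. e \<subseteq> V'" "V' \<noteq> {}"
    "(V', E') \<noteq> (V, E)"
  shows "density V' E' < density V E"
  using assms unfolding strictly_balanced_def by blast

lemma copy_of_subset_imp_eq: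
  assumes VE: "\<forall>e\<in>E. e \<subseteq> V" and fin: "finite V" "finite E"
    and f: "f \<in> embeddings V n" and g: "g \<in> embeddings V n"
    and sub: "f ` V \<subseteq> g ` V" "snd (copy_of V E f) \<subseteq> snd (copy_of V E g)"
  shows "copy_of V E f = copy_of V E g"
proof -
  have "card (f ` V) = card (g ` V)"
    "card (snd (copy_of V E f)) = card (snd (copy_of V E g))"
    using f g card_edges_copy_of[OF VE f] card_edges_copy_of[OF VE g]
    by (simp_all add: embeddings_def card_image)
  moreover have "finite (g ` V)" "finite (snd (copy_of V E g))"
    using fin by (simp_all add: copy_of_def)
  ultimately have "f ` V = g ` V" "snd (copy_of V E f) = snd (copy_of V E g)"
    using sub card_subset_eq by metis+
  thus ?thesis by (simp add: copy_of_def)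
qed

text \<open>The common part of two distinct copies is the image of a proper subgraph of H,
  so its density is below d(H).\<close>
lemma strictly_balanced_shared_edges_less:
  assumes sb: "strictly_balanced V E" and f: "f \<in> embeddings V n" and g: "g \<in> embeddings V n"
    and ne: "copy_of V E f \<noteq> copy_of V E g" and shared: "f ` V \<inter> g ` V \<noteq> {}"
  shows "card (snd (copy_of V E f) \<inter> snd (copy_of V E g)) * card V
           < card E * card (f ` V \<inter> g ` V)"
proof -
  note H = strictly_balancedD[OF sb]
  have fi: "inj_on f V" using f unfolding embeddings_def by auto
  define IV where "IV = {a\<in>V. f a \<in> g ` V}"
  define IE where "IE = {x\<in>E. f ` x \<in> (\<lambda>e. g ` e) ` E}"
  have IV: "IV \<subseteq> V" "f ` IV = f ` V \<inter> g ` V" and IE: "IE \<subseteq> E"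
    unfolding IV_def IE_def by auto
  have cIV: "card IV = card (f ` V \<inter> g ` V)"
    using IV card_image[OF inj_on_subset[OF fi IV(1)]] by simp
  have injE: "inj_on (\<lambda>e. f ` e) E" using fi H(4) by (meson inj_on_image_eq_iff inj_onI)
  have imgE: "(\<lambda>e. f ` e) ` IE = snd (copy_of V E f) \<inter> snd (copy_of V E g)"
    unfolding IE_def copy_of_def by auto
  have cIE: "card IE = card (snd (copy_of V E f) \<inter> snd (copy_of V E g))"
    using imgE card_image[OF inj_on_subset[OF injE IE]] by simp
  have IE_IV: "\<forall>x\<in>IE. x \<subseteq> IV"
  proof
    fix x assume "x \<in> IE"
    then obtain y where "x \<in> E" "y \<in> E" "f ` x = g ` y" unfolding IE_def by auto
    thus "x \<subseteq> IV" unfolding IV_def using H(4) by blast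
  qed
  have "IV \<noteq> {}" using IV shared by auto
  show ?thesis
  proof (cases "(IV, IE) = (V, E)")
    case False
    hence "density IV IE < density V E"
      using strictly_balanced_density_less[OF sb IV(1) IE IE_IV \<open>IV \<noteq> {}\<close>] by blast
    moreover have "card IV > 0" "card V > 0"
      using \<open>IV \<noteq> {}\<close> IV(1) H(2,3) by (auto simp: card_gt_0_iff dest: finite_subset)
    ultimately have "real (card IE) * real (card V) < real (card E) * real (card IV)"
      unfolding density_def by (simp add: divide_simps)
    hence "card IE * card V < card E * card IV" by (simp only: of_nat_mult[symmetric] of_nat_less_iff)
    thus ?thesis unfolding cIV[symmetric] cIE[symmetric] .
  next
    case True
    hence "IV = V" "IE = E" by simp_all
    hence "f ` V \<subseteq> g ` V" "snd (copy_of V E f) \<subseteq> snd (copy_of V E g)"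
      using IV(2) imgE unfolding copy_of_def by (metis Int_lower2 snd_conv)+
    hence "copy_of V E f = copy_of V E g" by (rule copy_of_subset_imp_eq[OF H(4,2,5) f g])
    thus ?thesis using ne by simp
  qed
qed

lemma strictly_balanced_card_vertices_le:
  assumes sb: "strictly_balanced V E" and "E \<noteq> {}"
  shows "card V \<le> 2 * card E"
proof -
  note H = strictly_balancedD[OF sb]
  obtain x where x: "x \<in> E" using assms by blast
  hence x2: "x \<subseteq> V" "card x = 2" using H(1) unfolding is_graph_def by auto
  show ?thesis
  proof (cases "(x, {x}) = (V, E)")
    case True
    thus ?thesis using x2 by auto
  next
    case False
    have "density x {x} < density V E"
      by (rule strictly_balanced_density_less[OF sb x2(1)]) (use x x2 False in auto)
    hence "1 / 2 < real (card E) / real (card V)" using x2 unfolding density_def by simp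
    moreover have "card V > 0" using H(2,3) by (simp add: card_gt_0_iff)
    ultimately show ?thesis by (simp add: divide_simps)
  qed
qed

lemma strictly_balanced_no_edges:
  assumes sb: "strictly_balanced V E" and "E = {}"
  shows "card V = 1"
proof (rule ccontr)
  assume "card V \<noteq> 1"
  obtain a where a: "a \<in> V" using strictly_balancedD(3)[OF sb] by blast
  have "({a}, {}) \<noteq> (V, E)" using \<open>card V \<noteq> 1\<close> by auto
  hence "density {a} {} < density V E"
    using a by (intro strictly_balanced_density_less[OF sb]) auto
  thus False using assms(2) unfolding density_def by simp
qed

section \<open>The second moment bound\<close>

lemma finite_Kn_edges: "finite (Kn_edges n)"
  unfolding Kn_edges_def by (rule finite_subset[of _ "Pow {..<n}"]) auto

lemma edge_orderings_eq_permutations_of_set: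
  "edge_orderings n = permutations_of_set (Kn_edges n)"
  unfolding edge_orderings_def permutations_of_set_def by auto

lemma finite_edge_orderings: "finite (edge_orderings n)"
  and edge_orderings_nonempty: "edge_orderings n \<noteq> {}"
  unfolding edge_orderings_eq_permutations_of_set using finite_Kn_edges by auto

lemma prob_graph_process:
  "measure_pmf.prob (graph_process n) B = card (edge_orderings n \<inter> B) / card (edge_orderings n)"
  unfolding graph_process_def
  by (rule measure_pmf_of_set[OF edge_orderings_nonempty finite_edge_orderings])

lemma card_edge_orderings_superset:
  assumes "S \<subseteq> Kn_edges n" "m \<le> card (Kn_edges n)"
  shows "real (card {xs \<in> edge_orderings n. S \<subseteq> graph_at xs m})
           = card (edge_orderings n) * containment_prob (card (Kn_edges n)) m (card S)"
  using card_permutations_of_set_take_superset[OF finite_Kn_edges assms] finite_Kn_edges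
  unfolding edge_orderings_eq_permutations_of_set graph_at_def by simp

lemma sum_indicator_graph_at:
  assumes "S \<subseteq> Kn_edges n" "m \<le> card (Kn_edges n)"
  shows "(\<Sum>xs\<in>edge_orderings n. if S \<subseteq> graph_at xs m then 1 else 0 :: real)
           = card (edge_orderings n) * containment_prob (card (Kn_edges n)) m (card S)"
  using card_edge_orderings_superset[OF assms] finite_edge_orderings
  by (simp add: sum.If_cases Int_def conj_commute)

lemma chebyshev_card_below:
  fixes X :: "'b \<Rightarrow> real" and \<mu> N :: real
  assumes fin: "finite \<Omega>" and mu: "(\<Sum>w\<in>\<Omega>. X w) = card \<Omega> * \<mu>" and N: "N < \<mu>"
  shows "real (card {w\<in>\<Omega>. X w < N}) * (\<mu> - N)^2 \<le> (\<Sum>w\<in>\<Omega>. (X w)^2) - card \<Omega> * \<mu>^2"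
proof -
  have "real (card {w\<in>\<Omega>. X w < N}) * (\<mu> - N)^2 = (\<Sum>w\<in>{w\<in>\<Omega>. X w < N}. (\<mu> - N)^2)" by simp
  also have "\<dots> \<le> (\<Sum>w\<in>{w\<in>\<Omega>. X w < N}. (X w - \<mu>)^2)"
  proof (rule sum_mono)
    fix w assume "w \<in> {w\<in>\<Omega>. X w < N}"
    hence "(\<mu> - N)^2 \<le> (\<mu> - X w)^2" using N by (intro power_mono) auto
    thus "(\<mu> - N)^2 \<le> (X w - \<mu>)^2" by (simp add: power2_commute)
  qed
  also have "\<dots> \<le> (\<Sum>w\<in>\<Omega>. (X w - \<mu>)^2)"
    by (rule sum_mono2[OF fin]) auto
  also have "\<dots> = (\<Sum>w\<in>\<Omega>. (X w)^2 - (2 * \<mu>) * X w + \<mu>^2)"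
    by (rule sum.cong) (simp_all add: power2_diff algebra_simps)
  also have "\<dots> = (\<Sum>w\<in>\<Omega>. (X w)^2) - 2 * \<mu> * (\<Sum>w\<in>\<Omega>. X w) + card \<Omega> * \<mu>^2"
    by (simp add: sum.distrib sum_subtractf sum_distrib_left)
  also have "\<dots> = (\<Sum>w\<in>\<Omega>. (X w)^2) - card \<Omega> * \<mu>^2"
    using mu by (simp add: power2_eq_square)
  finally show ?thesis .
qed

lemma copies_mono:
  assumes "G \<subseteq> G'"
  shows "copies V E n G \<subseteq> copies V E n G'"
proof
  fix C assume "C \<in> copies V E n G"
  then obtain f where f: "inj_on f V" "f ` V \<subseteq> {..<n}" "C = (f ` V, (\<lambda>e. f ` e) ` E)"
    "(\<lambda>e. f ` e) ` E \<subseteq> G"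
    unfolding copies_def by auto
  thus "C \<in> copies V E n G'"
    unfolding copies_def using assms by (auto intro!: exI[of _ f])
qed

lemma graph_at_mono: "t \<le> t' \<Longrightarrow> graph_at xs t \<subseteq> graph_at xs t'"
  unfolding graph_at_def by (rule set_take_subset_set_take)

lemma finite_copies: "\<forall>e\<in>E. e \<subseteq> V \<Longrightarrow> finite V \<Longrightarrow> finite (copies V E n G)"
  unfolding copies_eq_all_copies by (simp add: finite_all_copies)

text \<open>Copies only accumulate, so the N-th copy appears no later than time m.\<close>
lemma first_copies_disjointI:
  assumes VE: "\<forall>e\<in>E. e \<subseteq> V" and fin: "finite V"
    and N: "N \<le> card (copies V E n (graph_at xs m))"
    and disj: "\<forall>C\<in>copies V E n (graph_at xs m). \<forall>D\<in>copies V E n (graph_at xs m).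
                 C \<noteq> D \<longrightarrow> fst C \<inter> fst D = {}"
  shows "first_copies_disjoint V E N n xs"
proof -
  have mono: "card (copies V E n (graph_at xs t)) \<le> card (copies V E n (graph_at xs t'))"
    if "t \<le> t'" for t t'
    using that by (intro card_mono finite_copies[OF VE fin] copies_mono graph_at_mono)
  have "m \<le> length xs \<or> graph_at xs m = graph_at xs (length xs)"
    unfolding graph_at_def by auto
  hence enough: "N \<le> card (copies V E n (graph_at xs (length xs)))"
    using N mono by (metis order_trans)
  have early: "t \<le> m" if "t = 0 \<or> card (copies V E n (graph_at xs (t - 1))) < N" for t
  proof (rule ccontr)
    assume "\<not> t \<le> m"
    hence "m \<le> t - 1" "t \<noteq> 0" by auto
    thus False using that mono[of m "t - 1"] N by linarith
  qed
  have "copies V E n (graph_at xs t) \<subseteq> copies V E n (graph_at xs m)"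
    if "t = 0 \<or> card (copies V E n (graph_at xs (t - 1))) < N" for t
    using early[OF that] by (intro copies_mono graph_at_mono)
  with enough show ?thesis
    unfolding first_copies_disjoint_def using disj by blast
qed

lemma is_graphD: "is_graph V E \<Longrightarrow> finite V" "is_graph V E \<Longrightarrow> \<forall>e\<in>E. e \<subseteq> V"
  unfolding is_graph_def by auto

lemma edges_all_copies_subset_Kn_edges:
  "is_graph V E \<Longrightarrow> C \<in> all_copies V E n \<Longrightarrow> snd C \<subseteq> Kn_edges n"
  unfolding all_copies_def using edges_copy_of_subset_Kn_edges by blast

lemma card_edges_all_copies:
  "\<forall>e\<in>E. e \<subseteq> V \<Longrightarrow> C \<in> all_copies V E n \<Longrightarrow> card (snd C) = card E"
  unfolding all_copies_def using card_edges_copy_of by blast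

definition overlapping_pairs ::
    "'a set \<Rightarrow> 'a set set \<Rightarrow> nat \<Rightarrow> ((nat set \<times> nat set set) \<times> (nat set \<times> nat set set)) set" where
  "overlapping_pairs V E n =
     {(C, D) \<in> all_copies V E n \<times> all_copies V E n. C \<noteq> D \<and> fst C \<inter> fst D \<noteq> {}}"

text \<open>The expected numbers, in G_m, of copies of H and of ordered pairs of distinct
  copies sharing a vertex.\<close>
definition expected_copies :: "'a set \<Rightarrow> 'a set set \<Rightarrow> nat \<Rightarrow> nat \<Rightarrow> real" where
  "expected_copies V E n m =
     real (card (all_copies V E n)) * containment_prob (card (Kn_edges n)) m (card E)"

definition expected_overlaps :: "'a set \<Rightarrow> 'a set set \<Rightarrow> nat \<Rightarrow> nat \<Rightarrow> real" where
  "expected_overlaps V E n m =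
     (\<Sum>(C, D)\<in>overlapping_pairs V E n. containment_prob (card (Kn_edges n)) m (card (snd C \<union> snd D)))"

lemma finite_overlapping_pairs: "finite V \<Longrightarrow> finite (overlapping_pairs V E n)"
  unfolding overlapping_pairs_def by (rule finite_subset[of _ "all_copies V E n \<times> all_copies V E n"])
    (auto simp: finite_all_copies)

lemma card_copies_eq_sum:
  assumes "is_graph V E"
  shows "real (card (copies V E n G)) = (\<Sum>C\<in>all_copies V E n. if snd C \<subseteq> G then 1 else 0)"
  unfolding copies_eq_all_copies[OF is_graphD(2)[OF assms]]
  using finite_all_copies[OF is_graphD(1)[OF assms]]
  by (simp add: sum.If_cases Int_def conj_commute)

lemma sum_card_copies:
  assumes G: "is_graph V E" and m: "m \<le> card (Kn_edges n)"
  shows "(\<Sum>xs\<in>edge_orderings n. real (card (copies V E n (graph_at xs m))))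
           = card (edge_orderings n) * expected_copies V E n m"
proof -
  have "(\<Sum>xs\<in>edge_orderings n. real (card (copies V E n (graph_at xs m))))
      = (\<Sum>C\<in>all_copies V E n. \<Sum>xs\<in>edge_orderings n. if snd C \<subseteq> graph_at xs m then 1 else 0)"
    unfolding card_copies_eq_sum[OF G] by (rule sum.swap)
  also have "\<dots> = (\<Sum>C\<in>all_copies V E n.
                    card (edge_orderings n) * containment_prob (card (Kn_edges n)) m (card E))"
    using sum_indicator_graph_at[OF _ m] edges_all_copies_subset_Kn_edges[OF G]
      card_edges_all_copies[OF is_graphD(2)[OF G]] by (intro sum.cong) simp_all
  finally show ?thesis by (simp add: expected_copies_def)
qed

lemma sum_card_copies_squared:
  assumes G: "is_graph V E" and m: "m \<le> card (Kn_edges n)"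
  shows "(\<Sum>xs\<in>edge_orderings n. real (card (copies V E n (graph_at xs m)))^2)
           = card (edge_orderings n) * (\<Sum>C\<in>all_copies V E n. \<Sum>D\<in>all_copies V E n.
               containment_prob (card (Kn_edges n)) m (card (snd C \<union> snd D)))"
proof -
  let ?ind = "\<lambda>S xs. if S \<subseteq> graph_at xs m then 1 else 0 :: real"
  have sq: "real (card (copies V E n (graph_at xs m)))^2
      = (\<Sum>C\<in>all_copies V E n. \<Sum>D\<in>all_copies V E n. ?ind (snd C \<union> snd D) xs)" for xs
    unfolding card_copies_eq_sum[OF G] power2_eq_square sum_product
    by (intro sum.cong refl) auto
  have "(\<Sum>xs\<in>edge_orderings n. real (card (copies V E n (graph_at xs m)))^2)
      = (\<Sum>C\<in>all_copies V E n. \<Sum>xs\<in>edge_orderings n. \<Sum>D\<in>all_copies V E n. ?ind (snd C \<union> snd D) xs)"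
    unfolding sq by (rule sum.swap)
  also have "\<dots> = (\<Sum>C\<in>all_copies V E n. \<Sum>D\<in>all_copies V E n. \<Sum>xs\<in>edge_orderings n. ?ind (snd C \<union> snd D) xs)"
    by (rule sum.cong[OF refl]) (rule sum.swap)
  also have "\<dots> = (\<Sum>C\<in>all_copies V E n. \<Sum>D\<in>all_copies V E n. card (edge_orderings n)
                    * containment_prob (card (Kn_edges n)) m (card (snd C \<union> snd D)))"
    by (intro sum.cong refl sum_indicator_graph_at[OF _ m])
      (meson Un_least edges_all_copies_subset_Kn_edges[OF G])
  finally show ?thesis by (simp add: sum_distrib_left)
qed

text \<open>Vertex-disjoint copies have disjoint edge sets, and containment in G_m of disjoint
  edge sets is negatively correlated; so only the diagonal and the overlapping pairs
  contribute to the variance.\<close>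
lemma containment_prob_pair_le:
  assumes G: "is_graph V E" and m: "m \<le> card (Kn_edges n)"
    and C: "C \<in> all_copies V E n" and D: "D \<in> all_copies V E n"
  defines "p \<equiv> containment_prob (card (Kn_edges n)) m"
  shows "p (card (snd C \<union> snd D)) - p (card E)^2
           \<le> (if C = D then p (card E) else 0)
             + (if (C, D) \<in> overlapping_pairs V E n then p (card (snd C \<union> snd D)) else 0)"
proof -
  have nonneg: "0 \<le> p k" for k unfolding p_def by (rule containment_prob_nonneg[OF m])
  have cards: "card (snd C) = card E" "card (snd D) = card E"
    using card_edges_all_copies[OF is_graphD(2)[OF G]] C D by auto
  consider "C = D" | "C \<noteq> D" "fst C \<inter> fst D = {}" | "(C, D) \<in> overlapping_pairs V E n"
    using C D unfolding overlapping_pairs_def by auto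
  thus ?thesis
  proof cases
    case 1
    thus ?thesis using cards nonneg[of "card E"] by (simp add: overlapping_pairs_def)
  next
    case 2
    have "snd C \<inter> snd D = {}" by (rule edges_disjoint_if_vertices_disjoint[OF G C D 2(2)])
    moreover have "finite (snd C)" "finite (snd D)"
      using edges_all_copies_subset_Kn_edges[OF G] C D finite_Kn_edges finite_subset by blast+
    ultimately have "card (snd C \<union> snd D) = card E + card E" using cards by (simp add: card_Un_disjoint)
    hence "p (card (snd C \<union> snd D)) \<le> p (card E)^2"
      unfolding p_def power2_eq_square by (simp add: containment_prob_add_le[OF m])
    thus ?thesis using 2 nonneg by simp
  next
    case 3
    thus ?thesis using nonneg[of "card E"] by (simp add: overlapping_pairs_def)
  qed
qed

lemma second_moment_minus_square_le:
  assumes G: "is_graph V E" and m: "m \<le> card (Kn_edges n)"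
  shows "(\<Sum>C\<in>all_copies V E n. \<Sum>D\<in>all_copies V E n.
            containment_prob (card (Kn_edges n)) m (card (snd C \<union> snd D)))
          - (expected_copies V E n m)^2
         \<le> expected_copies V E n m + expected_overlaps V E n m"
proof -
  let ?A = "all_copies V E n" and ?p = "containment_prob (card (Kn_edges n)) m"
  let ?h = "\<lambda>(C, D). ?p (card (snd C \<union> snd D))"
  have fin: "finite ?A" using finite_all_copies[OF is_graphD(1)[OF G]] .
  have X: "expected_copies V E n m = (\<Sum>C\<in>?A. ?p (card E))"
    by (simp add: expected_copies_def)
  have "(\<Sum>C\<in>?A. \<Sum>D\<in>?A. ?p (card (snd C \<union> snd D))) - (expected_copies V E n m)^2
      = (\<Sum>C\<in>?A. \<Sum>D\<in>?A. ?p (card (snd C \<union> snd D)) - ?p (card E)^2)"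
    unfolding X power2_eq_square sum_product by (simp add: sum_subtractf)
  also have "\<dots> \<le> (\<Sum>C\<in>?A. \<Sum>D\<in>?A. (if C = D then ?p (card E) else 0)
                  + (if (C, D) \<in> overlapping_pairs V E n then ?h (C, D) else 0))"
    using containment_prob_pair_le[OF G m] by (intro sum_mono) (simp only: prod.case)
  also have "\<dots> = (\<Sum>C\<in>?A. ?p (card E))
                  + (\<Sum>p\<in>?A \<times> ?A. if p \<in> overlapping_pairs V E n then ?h p else 0)"
    using fin by (simp add: sum.distrib sum.cartesian_product)
  also have "\<dots> = expected_copies V E n m + expected_overlaps V E n m"
  proof -
    have "overlapping_pairs V E n \<subseteq> ?A \<times> ?A" unfolding overlapping_pairs_def by auto
    thus ?thesis using fin unfolding X expected_overlaps_def by (simp add: sum.If_cases Int_absorb1)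
  qed
  finally show ?thesis .
qed

lemma card_orderings_with_overlap_le:
  assumes G: "is_graph V E" and m: "m \<le> card (Kn_edges n)"
  shows "real (card {xs \<in> edge_orderings n. \<exists>(C, D)\<in>overlapping_pairs V E n.
                       snd C \<union> snd D \<subseteq> graph_at xs m})
           \<le> card (edge_orderings n) * expected_overlaps V E n m"
proof -
  let ?P = "overlapping_pairs V E n"
  have fin: "finite ?P" by (rule finite_overlapping_pairs[OF is_graphD(1)[OF G]])
  have "{xs \<in> edge_orderings n. \<exists>(C, D)\<in>?P. snd C \<union> snd D \<subseteq> graph_at xs m}
      = (\<Union>(C, D)\<in>?P. {xs \<in> edge_orderings n. snd C \<union> snd D \<subseteq> graph_at xs m})"
    by blast
  hence "card {xs \<in> edge_orderings n. \<exists>(C, D)\<in>?P. snd C \<union> snd D \<subseteq> graph_at xs m}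
      \<le> (\<Sum>(C, D)\<in>?P. card {xs \<in> edge_orderings n. snd C \<union> snd D \<subseteq> graph_at xs m})"
    using card_UN_le[OF fin] by (simp add: case_prod_unfold)
  hence "real (card {xs \<in> edge_orderings n. \<exists>(C, D)\<in>?P. snd C \<union> snd D \<subseteq> graph_at xs m})
      \<le> (\<Sum>(C, D)\<in>?P. real (card {xs \<in> edge_orderings n. snd C \<union> snd D \<subseteq> graph_at xs m}))"
    by (simp add: case_prod_unfold flip: of_nat_sum)
  also have "\<dots> = (\<Sum>(C, D)\<in>?P. card (edge_orderings n)
                    * containment_prob (card (Kn_edges n)) m (card (snd C \<union> snd D)))"
  proof -
    have "real (card {xs \<in> edge_orderings n. snd C \<union> snd D \<subseteq> graph_at xs m})
        = card (edge_orderings n) * containment_prob (card (Kn_edges n)) m (card (snd C \<union> snd D))"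
      if "(C, D) \<in> ?P" for C D
      using that edges_all_copies_subset_Kn_edges[OF G]
      by (intro card_edge_orderings_superset[OF _ m]) (auto simp: overlapping_pairs_def)
    thus ?thesis by (intro sum.cong refl) force
  qed
  finally show ?thesis by (simp add: expected_overlaps_def sum_distrib_left case_prod_unfold)
qed

lemma first_copies_disjoint_if_no_overlap:
  assumes G: "is_graph V E" and many: "N \<le> card (copies V E n (graph_at xs m))"
    and no_overlap: "\<not> (\<exists>(C, D)\<in>overlapping_pairs V E n. snd C \<union> snd D \<subseteq> graph_at xs m)"
  shows "first_copies_disjoint V E N n xs"
proof (rule first_copies_disjointI[OF is_graphD(2,1)[OF G] many])
  show "\<forall>C\<in>copies V E n (graph_at xs m). \<forall>D\<in>copies V E n (graph_at xs m).
          C \<noteq> D \<longrightarrow> fst C \<inter> fst D = {}"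
    using no_overlap unfolding copies_eq_all_copies[OF is_graphD(2)[OF G]] overlapping_pairs_def
    by blast
qed

lemma card_orderings_few_copies_le:
  assumes G: "is_graph V E" and m: "m \<le> card (Kn_edges n)"
    and N: "real N < expected_copies V E n m"
  defines "X \<equiv> expected_copies V E n m" and "Y \<equiv> expected_overlaps V E n m"
  shows "real (card {xs \<in> edge_orderings n. real (card (copies V E n (graph_at xs m))) < real N})
           \<le> card (edge_orderings n) * ((X + Y) / (X - real N)^2)"
proof -
  let ?\<Omega> = "edge_orderings n" and ?count = "\<lambda>xs. real (card (copies V E n (graph_at xs m)))"
  have "real (card {xs \<in> ?\<Omega>. ?count xs < real N}) * (X - real N)^2
      \<le> (\<Sum>xs\<in>?\<Omega>. (?count xs)^2) - card ?\<Omega> * X^2"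
    unfolding X_def
    by (rule chebyshev_card_below[OF finite_edge_orderings sum_card_copies[OF G m] N])
  also have "\<dots> = card ?\<Omega> * ((\<Sum>C\<in>all_copies V E n. \<Sum>D\<in>all_copies V E n.
                    containment_prob (card (Kn_edges n)) m (card (snd C \<union> snd D))) - X^2)"
    by (simp add: sum_card_copies_squared[OF G m] right_diff_distrib)
  also have "\<dots> \<le> card ?\<Omega> * (X + Y)"
    using second_moment_minus_square_le[OF G m] unfolding X_def Y_def
    by (intro mult_left_mono) auto
  finally show ?thesis
    using N unfolding X_def by (simp add: field_simps)
qed

lemma prob_first_copies_disjoint_ge:
  assumes G: "is_graph V E" and m: "m \<le> card (Kn_edges n)"
    and N: "real N < expected_copies V E n m"
  defines "X \<equiv> expected_copies V E n m" and "Y \<equiv> expected_overlaps V E n m"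
  shows "1 - ((X + Y) / (X - real N)^2 + Y)
           \<le> measure_pmf.prob (graph_process n) {xs. first_copies_disjoint V E N n xs}"
proof -
  let ?\<Omega> = "edge_orderings n" and ?good = "{xs. first_copies_disjoint V E N n xs}"
  define few where "few = {xs \<in> ?\<Omega>. real (card (copies V E n (graph_at xs m))) < real N}"
  define overlap where "overlap = {xs \<in> ?\<Omega>. \<exists>(C, D)\<in>overlapping_pairs V E n.
                                     snd C \<union> snd D \<subseteq> graph_at xs m}"
  define a where "a = (X + Y) / (X - real N)^2"
  have few_le: "real (card few) \<le> card ?\<Omega> * a"
    unfolding few_def a_def X_def Y_def by (rule card_orderings_few_copies_le[OF G m N])
  have overlap_le: "real (card overlap) \<le> card ?\<Omega> * Y"
    unfolding overlap_def Y_def by (rule card_orderings_with_overlap_le[OF G m])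
  have "xs \<in> few \<union> overlap" if "xs \<in> ?\<Omega>" "xs \<notin> ?good" for xs
  proof (rule ccontr)
    assume "xs \<notin> few \<union> overlap"
    hence "N \<le> card (copies V E n (graph_at xs m))"
      "\<not> (\<exists>(C, D)\<in>overlapping_pairs V E n. snd C \<union> snd D \<subseteq> graph_at xs m)"
      using that(1) unfolding few_def overlap_def by auto
    hence "first_copies_disjoint V E N n xs" by (rule first_copies_disjoint_if_no_overlap[OF G])
    with that(2) show False by simp
  qed
  hence "?\<Omega> \<subseteq> (?\<Omega> \<inter> ?good) \<union> few \<union> overlap" by blast
  hence "card ?\<Omega> \<le> card ((?\<Omega> \<inter> ?good) \<union> few \<union> overlap)"
    by (rule card_mono[rotated]) (auto simp: few_def overlap_def finite_edge_orderings)
  also have "\<dots> \<le> card (?\<Omega> \<inter> ?good) + card few + card overlap"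
    by (meson add_mono card_Un_le le_refl order_trans)
  finally have "(1 - (a + Y)) * card ?\<Omega> \<le> card (?\<Omega> \<inter> ?good)"
    using few_le overlap_le by (simp add: algebra_simps)
  moreover have "real (card ?\<Omega>) > 0"
    using finite_edge_orderings edge_orderings_nonempty by (simp add: card_gt_0_iff)
  ultimately show ?thesis
    unfolding a_def prob_graph_process by (simp add: pos_le_divide_eq)
qed

section \<open>Asymptotics at the critical time\<close>

lemma card_Kn_edges: "real (card (Kn_edges n)) = real n * (real n - 1) / 2"
proof -
  have "card (Kn_edges n) = n choose 2"
    unfolding Kn_edges_def using n_subsets[of "{..<n}" 2] by simp
  also have "\<dots> = n * (n - 1) div 2" by (rule choose_two)
  finally have "card (Kn_edges n) = n * (n - 1) div 2" .
  moreover have "even (n * (n - 1))" by (cases "even n") auto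
  ultimately have "real (card (Kn_edges n)) = real (n * (n - 1)) / 2"
    by (simp add: real_of_nat_div)
  thus ?thesis by (cases n) (simp_all add: algebra_simps)
qed

lemma expected_copies_ge:
  assumes "finite V" "card E \<le> m" "m \<le> card (Kn_edges n)"
  shows "real (n - card V) ^ card V / real (card V) ^ card V
           * ((real m - real (card E)) / real (card (Kn_edges n))) ^ card E
         \<le> expected_copies V E n m"
proof -
  have pos: "0 < real (card V) ^ card V" by (cases "card V") auto
  have "(n - card V) ^ card V \<le> card (all_copies V E n) * card V ^ card V"
    using card_embeddings_ge[OF assms(1)] card_embeddings_le_card_all_copies[OF assms(1)]
    by (rule order_trans)
  hence "real (n - card V) ^ card V \<le> real (card (all_copies V E n)) * real (card V) ^ card V"
    by (metis of_nat_le_iff of_nat_mult of_nat_power)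
  hence "real (n - card V) ^ card V / real (card V) ^ card V \<le> real (card (all_copies V E n))"
    using pos by (simp add: divide_simps)
  thus ?thesis
    unfolding expected_copies_def using containment_prob_ge_power[OF assms(2,3)] assms(2)
    by (intro mult_mono) auto
qed

lemma strictly_balanced_card_bounds:
  assumes sb: "strictly_balanced V E" and "E \<noteq> {}"
  shows "1 \<le> real (card E)" "1 \<le> real (card V)" "real (card V) \<le> 2 * real (card E)"
proof -
  show "1 \<le> real (card E)" using strictly_balancedD(5)[OF sb] assms(2)
    by (simp add: Suc_le_eq card_gt_0_iff)
  show "1 \<le> real (card V)" using strictly_balancedD(2,3)[OF sb]
    by (simp add: Suc_le_eq card_gt_0_iff)
  show "real (card V) \<le> 2 * real (card E)"
    using strictly_balanced_card_vertices_le[OF assms] by linarith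
qed

definition critical_density :: "'a set \<Rightarrow> 'a set set \<Rightarrow> nat \<Rightarrow> real" where
  "critical_density V E n =
     real n powr (1 / (4 * real (card E)^2) - real (card V) / real (card E))"

definition critical_time :: "'a set \<Rightarrow> 'a set set \<Rightarrow> nat \<Rightarrow> nat" where
  "critical_time V E n = nat \<lfloor>critical_density V E n * real (card (Kn_edges n))\<rfloor>"

lemma critical_time_le: "real (critical_time V E n) \<le> critical_density V E n * card (Kn_edges n)"
  and critical_time_ge: "critical_density V E n * card (Kn_edges n) - 1 \<le> real (critical_time V E n)"
proof -
  have "0 \<le> critical_density V E n * card (Kn_edges n)" by (simp add: critical_density_def)
  thus "real (critical_time V E n) \<le> critical_density V E n * card (Kn_edges n)"
    "critical_density V E n * card (Kn_edges n) - 1 \<le> real (critical_time V E n)"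
    unfolding critical_time_def by linarith+
qed

lemma critical_density_le_1:
  assumes "strictly_balanced V E" "E \<noteq> {}"
  shows "critical_density V E n \<le> 1"
proof -
  note b = strictly_balanced_card_bounds[OF assms]
  have "1 \<le> real (card V) * (4 * real (card E))"
    using b mult_mono[of 1 "real (card V)" 1 "4 * real (card E)"] by simp
  hence "1 / (4 * real (card E)^2) \<le> real (card V) / real (card E)"
    using b by (simp add: divide_simps power2_eq_square)
  hence "real n powr (1 / (4 * real (card E)^2) - real (card V) / real (card E)) \<le> real n powr 0"
    if "n \<noteq> 0" using that by (intro powr_mono) auto
  thus ?thesis unfolding critical_density_def by (cases "n = 0") auto
qed

lemma critical_time_le_card_Kn_edges:
  assumes "strictly_balanced V E" "E \<noteq> {}"
  shows "critical_time V E n \<le> card (Kn_edges n)"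
proof -
  have "critical_density V E n * card (Kn_edges n) \<le> card (Kn_edges n)"
    using critical_density_le_1[OF assms] by (simp add: critical_density_def mult_left_le_one_le)
  thus ?thesis using critical_time_le[of V E n] by linarith
qed

lemma filterlim_critical_density_mult_card_Kn_edges:
  assumes "strictly_balanced V E" "E \<noteq> {}"
  shows "filterlim (\<lambda>n. critical_density V E n * card (Kn_edges n)) at_top sequentially"
proof -
  define b where "b = 1 / (4 * real (card E)^2) - real (card V) / real (card E)"
  note bounds = strictly_balanced_card_bounds[OF assms]
  have "real (card V) / real (card E) \<le> 2" using bounds by (simp add: divide_simps)
  moreover have "0 < 1 / (4 * real (card E)^2)" using bounds by simp
  ultimately have "b > -2" unfolding b_def by linarith
  hence "filterlim (\<lambda>n. real n powr b * (real n * (real n - 1) / 2)) at_top sequentially"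
    by real_asymp
  thus ?thesis unfolding critical_density_def card_Kn_edges b_def .
qed

lemma expected_copies_critical_time_ge:
  assumes sb: "strictly_balanced V E" and "E \<noteq> {}"
    and n: "2 \<le> n" "2 * card V \<le> n"
    and large: "2 * (real (card E) + 1) \<le> critical_density V E n * card (Kn_edges n)"
  shows "real n powr (1 / (4 * real (card E))) / (2 ^ card V * real (card V) ^ card V * 2 ^ card E)
           \<le> expected_copies V E n (critical_time V E n)"
proof -
  define v e q m M where "v = card V" and "e = card E" and "q = critical_density V E n"
    and "m = critical_time V E n" and "M = card (Kn_edges n)"
  note bounds = strictly_balanced_card_bounds[OF assms(1,2), folded v_def e_def]
  have q: "0 \<le> q" unfolding q_def critical_density_def by simp
  have large': "2 * (real e + 1) \<le> q * real M" using large unfolding q_def M_def e_def .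
  have "real m \<ge> q * real M - 1" unfolding m_def q_def M_def by (rule critical_time_ge)
  hence m_e: "q * real M \<le> 2 * (real m - real e)" using large' by argo
  have "0 \<le> q * real M" using q by simp
  hence "real e \<le> real m" using m_e by argo
  hence e_m: "e \<le> m" by simp
  have "0 < real M" using large' q by (cases "M = 0") auto
  hence ratio: "(real m - real e) / real M \<ge> q / 2" using m_e by (simp add: divide_simps)
  have "real (n - v) \<ge> real n / 2" using n unfolding v_def by linarith
  hence "(real n / 2) ^ v / real v ^ v * (q / 2) ^ e
      \<le> real (n - v) ^ v / real v ^ v * ((real m - real e) / real M) ^ e"
    using q ratio bounds by (intro mult_mono divide_right_mono power_mono) auto
  also have "\<dots> \<le> expected_copies V E n m"
    using expected_copies_ge[OF strictly_balancedD(2)[OF sb] e_m[unfolded e_def]]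
      critical_time_le_card_Kn_edges[OF assms(1,2)]
    unfolding v_def e_def m_def M_def by blast
  also have "(real n / 2) ^ v / real v ^ v * (q / 2) ^ e
      = real n ^ v * q ^ e / (2 ^ v * real v ^ v * 2 ^ e)"
    by (simp add: power_divide)
  also have "real n ^ v * q ^ e = real n powr (1 / (4 * real e))"
  proof -
    have "real n ^ v * q ^ e = real n powr (real v + real e * (1 / (4 * real e^2) - real v / real e))"
      using n unfolding q_def critical_density_def v_def e_def
      by (simp add: powr_add powr_power powr_realpow)
    also have "real v + real e * (1 / (4 * real e^2) - real v / real e) = 1 / (4 * real e)"
      using bounds by (simp add: field_simps power2_eq_square)
    finally show ?thesis .
  qed
  finally show ?thesis unfolding v_def e_def m_def .
qed

lemma filterlim_expected_copies_critical_time: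
  assumes "strictly_balanced V E" "E \<noteq> {}"
  shows "filterlim (\<lambda>n. expected_copies V E n (critical_time V E n)) at_top sequentially"
proof -
  define C where "C = 2 ^ card V * real (card V) ^ card V * 2 ^ card E"
  note bounds = strictly_balanced_card_bounds[OF assms]
  have "C > 0" "1 / (4 * real (card E)) > 0" using bounds unfolding C_def by auto
  hence "filterlim (\<lambda>n. real n powr (1 / (4 * real (card E))) / C) at_top sequentially"
    by real_asymp
  moreover have "eventually (\<lambda>n. 2 * (real (card E) + 1)
                    \<le> critical_density V E n * card (Kn_edges n)) sequentially"
    using filterlim_critical_density_mult_card_Kn_edges[OF assms] by (simp add: filterlim_at_top)
  hence "eventually (\<lambda>n. real n powr (1 / (4 * real (card E))) / C
                    \<le> expected_copies V E n (critical_time V E n)) sequentially"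
    using eventually_ge_at_top[of "2 + 2 * card V"] unfolding C_def
    by eventually_elim (rule expected_copies_critical_time_ge[OF assms]; simp)
  ultimately show ?thesis by (rule filterlim_at_top_mono)
qed

lemma overlapping_pairs_eq_image:
  "overlapping_pairs V E n = (\<lambda>(f, g). (copy_of V E f, copy_of V E g)) `
     {(f, g) \<in> embeddings V n \<times> embeddings V n.
        copy_of V E f \<noteq> copy_of V E g \<and> f ` V \<inter> g ` V \<noteq> {}}"
    (is "_ = ?F ` ?B")
proof (intro equalityI subsetI)
  fix p assume p: "p \<in> overlapping_pairs V E n"
  obtain C D where CD: "p = (C, D)" by (cases p)
  with p have "C \<in> all_copies V E n" "D \<in> all_copies V E n" "C \<noteq> D" "fst C \<inter> fst D \<noteq> {}"
    unfolding overlapping_pairs_def by simp_all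
  moreover from this(1,2) obtain f g where
    "f \<in> embeddings V n" "C = copy_of V E f" "g \<in> embeddings V n" "D = copy_of V E g"
    unfolding all_copies_def by blast
  ultimately have "(f, g) \<in> ?B" "p = ?F (f, g)" using CD by (simp_all add: copy_of_def)
  thus "p \<in> ?F ` ?B" by blast
next
  fix p assume "p \<in> ?F ` ?B"
  then obtain f g where "f \<in> embeddings V n" "g \<in> embeddings V n"
    "copy_of V E f \<noteq> copy_of V E g" "f ` V \<inter> g ` V \<noteq> {}" "p = (copy_of V E f, copy_of V E g)"
    by auto
  moreover from this(1,2) have "copy_of V E f \<in> all_copies V E n" "copy_of V E g \<in> all_copies V E n"
    unfolding all_copies_def by simp_all
  ultimately show "p \<in> overlapping_pairs V E n"
    unfolding overlapping_pairs_def by (simp add: copy_of_def[of V E f] copy_of_def[of V E g])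
qed

text \<open>Weighting each value of g by n when it lies in f ` V makes the sum factor over V.\<close>
lemma sum_power_card_Int_image_le:
  assumes fin: "finite V" and f: "f \<in> embeddings V n"
  shows "(\<Sum>g\<in>embeddings V n. real n ^ card (f ` V \<inter> g ` V)) \<le> ((real (card V) + 1) * real n) ^ card V"
proof -
  define w where "w = (\<lambda>x. if x \<in> f ` V then real n else 1)"
  have w: "0 \<le> w x" for x unfolding w_def by simp
  have "real n ^ card (f ` V \<inter> g ` V) = (\<Prod>a\<in>V. w (g a))" if g: "g \<in> embeddings V n" for g
  proof -
    have "inj_on g V" using g unfolding embeddings_def by simp
    moreover have "f ` V \<inter> g ` V = g ` {a\<in>V. g a \<in> f ` V}" by (auto intro!: imageI) (metis imageI)
    ultimately have "card (f ` V \<inter> g ` V) = card {a\<in>V. g a \<in> f ` V}"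
      by (simp add: card_image inj_on_subset)
    thus ?thesis unfolding w_def using fin by (simp add: prod.If_cases Int_def conj_commute)
  qed
  hence "(\<Sum>g\<in>embeddings V n. real n ^ card (f ` V \<inter> g ` V)) = (\<Sum>g\<in>embeddings V n. \<Prod>a\<in>V. w (g a))"
    by (rule sum.cong[OF refl])
  also have "\<dots> \<le> (\<Sum>g\<in>V \<rightarrow>\<^sub>E {..<n}. \<Prod>a\<in>V. w (g a))"
    by (rule sum_mono2) (auto simp: embeddings_def fin intro: finite_PiE prod_nonneg w)
  also have "\<dots> = (\<Sum>x<n. w x) ^ card V"
    using prod_sum_PiE[OF fin, of "\<lambda>_. {..<n}" "\<lambda>_ x. w x"] by simp
  also have "\<dots> \<le> ((real (card V) + 1) * real n) ^ card V"
  proof (rule power_mono)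
    have "card ({..<n} \<inter> f ` V) \<le> card V"
      using card_mono[of "f ` V" "{..<n} \<inter> f ` V"] card_image_le[OF fin, of f] fin by auto
    have "(\<Sum>x<n. w x) \<le> (\<Sum>x<n. 1 + (if x \<in> f ` V then real n else 0))"
      by (rule sum_mono) (simp add: w_def)
    also have "\<dots> = real n + real n * real (card ({..<n} \<inter> f ` V))"
      by (simp add: sum.distrib sum.If_cases)
    also have "\<dots> \<le> (real (card V) + 1) * real n"
      using \<open>card ({..<n} \<inter> f ` V) \<le> card V\<close> by (simp add: algebra_simps mult_left_mono)
    finally show "(\<Sum>x<n. w x) \<le> (real (card V) + 1) * real n" .
  qed (simp add: sum_nonneg w)
  finally show ?thesis .
qed

lemma sum_embedding_pairs_power_le:
  assumes "finite V"
  shows "(\<Sum>(f, g)\<in>embeddings V n \<times> embeddings V n. real n ^ card (f ` V \<inter> g ` V))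
           \<le> (real (card V) + 1) ^ card V * real n ^ (2 * card V)"
proof -
  have "(\<Sum>(f, g)\<in>embeddings V n \<times> embeddings V n. real n ^ card (f ` V \<inter> g ` V))
      = (\<Sum>f\<in>embeddings V n. \<Sum>g\<in>embeddings V n. real n ^ card (f ` V \<inter> g ` V))"
    by (simp add: sum.cartesian_product case_prod_unfold)
  also have "\<dots> \<le> (\<Sum>f\<in>embeddings V n. ((real (card V) + 1) * real n) ^ card V)"
    using sum_power_card_Int_image_le[OF assms] by (intro sum_mono) auto
  also have "\<dots> = real (card (embeddings V n)) * ((real (card V) + 1) * real n) ^ card V" by simp
  also have "\<dots> \<le> real n ^ card V * ((real (card V) + 1) * real n) ^ card V"
    using card_embeddings_le[OF assms, of n] by (intro mult_right_mono) (simp_all flip: of_nat_power)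
  also have "\<dots> = (real (card V) + 1) ^ card V * real n ^ (2 * card V)"
    by (simp add: power_mult_distrib mult_2 power_add)
  finally show ?thesis .
qed

text \<open>The exponent count behind the bound on overlapping pairs: two copies sharing j
  vertices and c edges, with c v \<le> e j - 1 by strict balancedness, span 2e - c edges.\<close>
lemma overlap_exponent_le:
  fixes e v c j :: real
  assumes e: "0 < e" and cv: "c * v \<le> e * j - 1" and c: "0 \<le> c"
  shows "(2 * e - c) * (1 / (4 * e^2) - v / e) \<le> j - 2 * v - 1 / (2 * e)"
proof -
  have "(2 * e - c) * (1 / (4 * e^2) - v / e) = 1 / (2 * e) - c / (4 * e^2) - 2 * v + c * v / e"
    using e by (simp add: field_simps power2_eq_square)
  moreover have "c * v / e \<le> j - 1 / e" using cv e by (simp add: field_simps)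
  moreover have "0 \<le> c / (4 * e^2)" using c by simp
  moreover have "1 / (2 * e) - 1 / e = - 1 / (2 * e)" using e by (simp add: field_simps)
  ultimately show ?thesis by linarith
qed

lemma containment_prob_overlap_le:
  assumes sb: "strictly_balanced V E" and "E \<noteq> {}" and "1 \<le> n"
    and m: "m \<le> card (Kn_edges n)" "real m \<le> critical_density V E n * card (Kn_edges n)"
    and f: "f \<in> embeddings V n" and g: "g \<in> embeddings V n"
    and ne: "copy_of V E f \<noteq> copy_of V E g" and shared: "f ` V \<inter> g ` V \<noteq> {}"
  shows "containment_prob (card (Kn_edges n)) m (card (snd (copy_of V E f) \<union> snd (copy_of V E g)))
           \<le> real n powr (- 2 * real (card V) - 1 / (2 * real (card E)))
             * real n ^ card (f ` V \<inter> g ` V)"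
proof -
  define v e M where "v = card V" and "e = card E" and "M = card (Kn_edges n)"
  define c u j where "c = card (snd (copy_of V E f) \<inter> snd (copy_of V E g))"
    and "u = card (snd (copy_of V E f) \<union> snd (copy_of V E g))" and "j = card (f ` V \<inter> g ` V)"
  define q where "q = critical_density V E n"
  have e: "real e > 0" using strictly_balanced_card_bounds[OF sb assms(2)] unfolding e_def by simp
  have "c * v + 1 \<le> e * j"
    using strictly_balanced_shared_edges_less[OF sb f g ne shared] unfolding c_def v_def e_def j_def
    by simp
  hence "real (c * v + 1) \<le> real (e * j)" by (rule of_nat_mono)
  hence cv: "real c * real v \<le> real e * real j - 1" by simp
  have "finite (snd (copy_of V E f))" "finite (snd (copy_of V E g))"
    using strictly_balancedD(5)[OF sb] by (simp_all add: copy_of_def)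
  hence "u + c = e + e"
    using card_Un_Int card_edges_copy_of[OF strictly_balancedD(4)[OF sb]] f g
    unfolding u_def c_def e_def by metis
  hence u: "real u = 2 * real e - real c" by linarith
  have q: "0 \<le> q" "real m / real M \<le> q"
    using m(2) unfolding q_def M_def critical_density_def by (auto simp: divide_simps mult.commute)
  have "containment_prob M m u \<le> (real m / real M) ^ u"
    using containment_prob_le_power m(1) unfolding M_def by blast
  also have "\<dots> \<le> q ^ u" using q by (intro power_mono) simp_all
  also have "\<dots> = real n powr (real u * (1 / (4 * real e^2) - real v / real e))"
    unfolding q_def critical_density_def v_def e_def using assms(3) by (simp add: powr_power)
  also have "\<dots> \<le> real n powr (real j - 2 * real v - 1 / (2 * real e))"
    using assms(3) overlap_exponent_le[OF e cv] u by (intro powr_mono) auto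
  also have "\<dots> = real n powr (- 2 * real v - 1 / (2 * real e)) * real n ^ j"
    using assms(3) by (simp add: powr_add[symmetric] powr_realpow[symmetric] algebra_simps)
  finally show ?thesis unfolding M_def u_def v_def e_def j_def .
qed

lemma expected_overlaps_le:
  assumes sb: "strictly_balanced V E" and "E \<noteq> {}" and n: "1 \<le> n"
    and m: "m \<le> card (Kn_edges n)" "real m \<le> critical_density V E n * card (Kn_edges n)"
  shows "expected_overlaps V E n m
           \<le> (real (card V) + 1) ^ card V * real n powr (- 1 / (2 * real (card E)))"
proof -
  define v e K where "v = card V" and "e = card E"
    and "K = real n powr (- 2 * real (card V) - 1 / (2 * real (card E)))"
  define B where "B = {(f, g) \<in> embeddings V n \<times> embeddings V n.
                         copy_of V E f \<noteq> copy_of V E g \<and> f ` V \<inter> g ` V \<noteq> {}}"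
  let ?p = "containment_prob (card (Kn_edges n)) m"
  have fin: "finite (embeddings V n)" using finite_embeddings[OF strictly_balancedD(2)[OF sb]] .
  have "expected_overlaps V E n m
      = (\<Sum>(C, D)\<in>(\<lambda>(f, g). (copy_of V E f, copy_of V E g)) ` B. ?p (card (snd C \<union> snd D)))"
    unfolding expected_overlaps_def overlapping_pairs_eq_image B_def ..
  also have "\<dots> \<le> sum ((\<lambda>(C, D). ?p (card (snd C \<union> snd D)))
                          \<circ> (\<lambda>(f, g). (copy_of V E f, copy_of V E g))) B"
    using fin containment_prob_nonneg[OF m(1)] unfolding B_def
    by (intro sum_image_le) (auto intro: finite_subset[of _ "embeddings V n \<times> embeddings V n"])
  also have "\<dots> = (\<Sum>(f, g)\<in>B. ?p (card (snd (copy_of V E f) \<union> snd (copy_of V E g))))"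
    by (simp add: case_prod_unfold comp_def)
  also have "\<dots> \<le> (\<Sum>(f, g)\<in>B. K * real n ^ card (f ` V \<inter> g ` V))"
    using containment_prob_overlap_le[OF sb assms(2) n m] unfolding B_def K_def
    by (intro sum_mono) auto
  also have "\<dots> \<le> (\<Sum>(f, g)\<in>embeddings V n \<times> embeddings V n. K * real n ^ card (f ` V \<inter> g ` V))"
    using fin unfolding B_def K_def by (intro sum_mono2) auto
  also have "\<dots> = K * (\<Sum>(f, g)\<in>embeddings V n \<times> embeddings V n. real n ^ card (f ` V \<inter> g ` V))"
    by (simp add: sum_distrib_left case_prod_unfold)
  also have "\<dots> \<le> K * ((real v + 1) ^ v * real n ^ (2 * v))"
    unfolding v_def K_def
    by (intro mult_left_mono sum_embedding_pairs_power_le[OF strictly_balancedD(2)[OF sb]]) simp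
  also have "\<dots> = (real v + 1) ^ v * (K * real n powr (2 * real v))"
    using powr_realpow[of "real n" "2 * v"] n by simp
  also have "K * real n powr (2 * real v) = real n powr (- 1 / (2 * real e))"
    unfolding K_def v_def e_def by (simp add: powr_add[symmetric])
  finally show ?thesis unfolding v_def e_def .
qed

lemma expected_overlaps_critical_time_tendsto_0:
  assumes "strictly_balanced V E" "E \<noteq> {}"
  shows "(\<lambda>n. expected_overlaps V E n (critical_time V E n)) \<longlonglongrightarrow> 0"
proof (rule tendsto_sandwich)
  show "eventually (\<lambda>n. 0 \<le> expected_overlaps V E n (critical_time V E n)) sequentially"
    unfolding expected_overlaps_def case_prod_unfold
    by (intro always_eventually allI sum_nonneg containment_prob_nonneg
        critical_time_le_card_Kn_edges[OF assms])
  show "eventually (\<lambda>n. expected_overlaps V E n (critical_time V E n)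
          \<le> (real (card V) + 1) ^ card V * real n powr (- 1 / (2 * real (card E)))) sequentially"
    using eventually_ge_at_top[of 1]
    by eventually_elim (intro expected_overlaps_le[OF assms] critical_time_le_card_Kn_edges[OF assms]
        critical_time_le, simp)
  have "0 < 1 / (2 * real (card E))" using strictly_balanced_card_bounds[OF assms] by simp
  thus "(\<lambda>n. (real (card V) + 1) ^ card V * real n powr (- 1 / (2 * real (card E)))) \<longlonglongrightarrow> 0"
    by real_asymp
qed simp

lemma add_div_square_diff_le:
  fixes X Y N :: real
  assumes "0 < X" "0 \<le> N" "2 * N \<le> X" "Y \<le> X"
  shows "(X + Y) / (X - N)^2 \<le> 8 / X"
proof -
  have "X / 2 \<le> X - N" using assms by linarith
  hence "(X / 2)^2 \<le> (X - N)^2" using assms by (intro power_mono) auto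
  hence "(X + Y) / (X - N)^2 \<le> (2 * X) / (X / 2)^2" using assms by (intro frac_le) auto
  also have "\<dots> = 8 / X" using assms by (simp add: field_simps power2_eq_square)
  finally show ?thesis .
qed

lemma prob_first_copies_disjoint_no_edges:
  assumes sb: "strictly_balanced V E" and E: "E = {}" and n: "N < n"
  shows "measure_pmf.prob (graph_process n) {xs. first_copies_disjoint V E N n xs} = 1"
proof -
  obtain a where V: "V = {a}" using strictly_balanced_no_edges[OF assms(1,2)] by (auto simp: card_Suc_eq)
  have all: "copies V E n G = all_copies V E n" for G
    unfolding copies_eq_all_copies[OF strictly_balancedD(4)[OF sb]]
    by (auto simp: all_copies_def copy_of_def E)
  have "N \<le> card (all_copies V E n)"
    using card_embeddings_ge[of V n] card_embeddings_le_card_all_copies[of V n E] V n by simp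
  moreover have "fst C \<inter> fst D = {}" if "C \<in> all_copies V E n" "D \<in> all_copies V E n" "C \<noteq> D" for C D
    using that unfolding all_copies_def copy_of_def V E by auto
  ultimately have "first_copies_disjoint V E N n xs" for xs
    using first_copies_disjointI[OF strictly_balancedD(4,2)[OF sb], of N n xs 0] unfolding all by blast
  hence "edge_orderings n \<inter> {xs. first_copies_disjoint V E N n xs} = edge_orderings n" by blast
  thus ?thesis
    unfolding prob_graph_process using finite_edge_orderings edge_orderings_nonempty by simp
qed

lemma eventually_prob_first_copies_disjoint_ge:
  assumes sb: "strictly_balanced V E" and "E \<noteq> {}"
  defines "X n \<equiv> expected_copies V E n (critical_time V E n)"
    and "Y n \<equiv> expected_overlaps V E n (critical_time V E n)"
  shows "eventually (\<lambda>n. 1 - (8 / X n + Y n)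
           \<le> measure_pmf.prob (graph_process n) {xs. first_copies_disjoint V E N n xs}) sequentially"
proof -
  have "eventually (\<lambda>n. 2 * real N + 1 \<le> X n) sequentially"
    using filterlim_expected_copies_critical_time[OF assms(1,2)]
    unfolding X_def by (simp add: filterlim_at_top)
  moreover have "eventually (\<lambda>n. Y n < 1) sequentially"
    using expected_overlaps_critical_time_tendsto_0[OF assms(1,2)] unfolding Y_def
    by (rule order_tendstoD) simp
  ultimately show ?thesis
  proof eventually_elim
    case (elim n)
    have "(X n + Y n) / (X n - real N)^2 \<le> 8 / X n"
      using elim by (intro add_div_square_diff_le) auto
    moreover have "1 - ((X n + Y n) / (X n - real N)^2 + Y n)
        \<le> measure_pmf.prob (graph_process n) {xs. first_copies_disjoint V E N n xs}"
      using elim(1) unfolding X_def Y_def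
      by (intro prob_first_copies_disjoint_ge strictly_balancedD(1)[OF sb]
          critical_time_le_card_Kn_edges[OF assms(1,2)]) simp
    ultimately show ?case by linarith
  qed
qed

theorem mainTheorem20:
  fixes V :: "'a set" and E :: "'a set set" and N :: nat
  assumes "strictly_balanced V E" and "N > 0"
  shows "(\<lambda>n. measure_pmf.prob (graph_process n) {xs. first_copies_disjoint V E N n xs})
           \<longlonglongrightarrow> 1"
proof (cases "E = {}")
  case True
  have "eventually (\<lambda>n. measure_pmf.prob (graph_process n) {xs. first_copies_disjoint V E N n xs} = 1)
          sequentially"
    using eventually_gt_at_top[of N]
    by eventually_elim (rule prob_first_copies_disjoint_no_edges[OF assms(1) True])
  thus ?thesis by (rule tendsto_eventually)
next
  case False
  define X Y where "X n = expected_copies V E n (critical_time V E n)"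
    and "Y n = expected_overlaps V E n (critical_time V E n)" for n
  have lower: "eventually (\<lambda>n. 1 - (8 / X n + Y n)
      \<le> measure_pmf.prob (graph_process n) {xs. first_copies_disjoint V E N n xs}) sequentially"
    unfolding X_def Y_def by (rule eventually_prob_first_copies_disjoint_ge[OF assms(1) False])
  have X_inverse: "(\<lambda>n. 8 / X n) \<longlonglongrightarrow> 0"
    using filterlim_expected_copies_critical_time[OF assms(1) False] unfolding X_def
    by (rule tendsto_divide_0[OF tendsto_const filterlim_at_top_imp_at_infinity])
  have Y: "Y \<longlonglongrightarrow> 0"
    unfolding Y_def by (rule expected_overlaps_critical_time_tendsto_0[OF assms(1) False])
  have lim: "(\<lambda>n. 1 - (8 / X n + Y n)) \<longlonglongrightarrow> 1"
    using tendsto_diff[OF tendsto_const[of 1] tendsto_add[OF X_inverse Y]] by simp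
  have upper: "eventually (\<lambda>n. measure_pmf.prob (graph_process n)
                 {xs. first_copies_disjoint V E N n xs} \<le> 1) sequentially"
    by (simp add: measure_pmf.prob_le_1)
  show ?thesis by (rule tendsto_sandwich[OF lower upper lim tendsto_const])
qed

end
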